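(* For any $\sigma$-structure $\mathcal{A}$, the $\mathfrak{g}$-guarded tree-width of $\mathcal{A}$ and the $\mathfrak{g}$-guarded coalgebra number of $\mathcal{A}$ coincide.
   Context: $\mathfrak{g}$ is atom or loose guarding (for which the resource-bounded comonads $\mathbb{G}_k^{\mathfrak{g}}$ are defined). $\mathbb{G}_k^{\mathfrak{g}}\mathcal{A}$ has universe the equivalence classes $[p,a]$ of focussed plays $\langle p,a\rangle$, where $p$ is a non-empty list of $k$-guarded $\mathfrak{g}$-guarded sets of $\mathcal{A}$ and $a\in\lambda(p)$ (last element), under $\langle p,a\rangle\sim\langle q,a'\rangle$ iff $a=a'$, $p\sqcap q$ is non-empty, and $a\in\lambda(u)$ for all $u$ on the prefix-order paths from $p\sqcap q$ to $p$ and to $q$; relations $R^{\mathbb{G}_k\mathcal{A}}=\{([p,a_1],\ldots,[p,a_r])\mid R^{\mathcal{A}}(a_1,\ldots,a_r)\}$. A $\mathfrak{g}$-guarded decomposition of $\mathcal{A}$ is a map $\tau$ from $A$ to $\mathfrak{g}$-guarded plays, with image $P_\tau$, that is reflexive ($a\in\lambda(\tau(a))$), edge covering (adjacent elements in the Gaifman graph lie together in some $\lambda(p)$, $p\in P_\tau$), minimal ($[\tau(a),a]=[q,a]$ implies $\tau(a)\sqsubseteq q$) and vertex connected (for $q$ below some element of $P_\tau$ with $a\in\lambda(q)$, $[\tau(a),a]=[q,a]$); it is $k$-bounded if $|\lambda(p)|\le k$ for all $p\in P_\tau$. The $\mathfrak{g}$-guarded tree-width of $\mathcal{A}$ is the least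 $k$ such that $\mathcal{A}$ has a $k$-bounded $\mathfrak{g}$-guarded decomposition; the $\mathfrak{g}$-guarded coalgebra number is the least $k$ such that there is a coalgebra $\mathcal{A}\to\mathbb{G}_k^{\mathfrak{g}}\mathcal{A}$. *)

theory Defs
  imports Main "HOL-Library.Sublist"
begin

record ('a, 'r) struc =
  univ :: "'a set"
  rel  :: "'r \<Rightarrow> 'a list set"

text \<open>A sigma-structure: sigma is given by the relation symbols of type 'r with arity ar.\<close>
definition wf_struc :: "('r \<Rightarrow> nat) \<Rightarrow> ('a, 'r) struc \<Rightarrow> bool" where
  "wf_struc ar A \<longleftrightarrow> (\<forall>R. \<forall>t\<in>rel A R. length t = ar R \<and> set t \<subseteq> univ A)"

definition hom :: "('a, 'r) struc \<Rightarrow> ('b, 'r) struc \<Rightarrow> ('a \<Rightarrow> 'b) \<Rightarrow> bool" where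
  "hom A B f \<longleftrightarrow> (\<forall>a\<in>univ A. f a \<in> univ B) \<and> (\<forall>R. \<forall>t\<in>rel A R. map f t \<in> rel B R)"

datatype guarding = AtomG | LooseG

definition atom_guarded :: "('a, 'r) struc \<Rightarrow> 'a set \<Rightarrow> bool" where
  "atom_guarded A S \<longleftrightarrow> (\<exists>a\<in>univ A. S = {a}) \<or> (\<exists>R. \<exists>t\<in>rel A R. S = set t)"

definition loose_guarded :: "('a, 'r) struc \<Rightarrow> 'a set \<Rightarrow> bool" where
  "loose_guarded A S \<longleftrightarrow> S \<subseteq> univ A \<and>
     (\<forall>a\<in>S. \<forall>b\<in>S. \<exists>T. atom_guarded A T \<and> {a, b} \<subseteq> T)"

fun guarded :: "guarding \<Rightarrow> ('a, 'r) struc \<Rightarrow> 'a set \<Rightarrow> bool" where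
  "guarded AtomG A S = atom_guarded A S"
| "guarded LooseG A S = loose_guarded A S"

definition kguarded :: "guarding \<Rightarrow> nat \<Rightarrow> ('a, 'r) struc \<Rightarrow> 'a set \<Rightarrow> bool" where
  "kguarded g k A S \<longleftrightarrow> guarded g A S \<and> finite S \<and> card S \<le> k"

definition play :: "('a set \<Rightarrow> bool) \<Rightarrow> 'a set list \<Rightarrow> bool" where
  "play good p \<longleftrightarrow> p \<noteq> [] \<and> (\<forall>S\<in>set p. good S)"

definition fplay :: "('a set \<Rightarrow> bool) \<Rightarrow> 'a set list \<Rightarrow> 'a \<Rightarrow> bool" where
  "fplay good p a \<longleftrightarrow> play good p \<and> a \<in> last p"

fun lcp :: "'x list \<Rightarrow> 'x list \<Rightarrow> 'x list" where
  "lcp (x # xs) (y # ys) = (if x = y then x # lcp xs ys else [])"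
| "lcp _ _ = []"

text \<open>a lies in lambda(u) for all u on the prefix-order path from r to p.\<close>
definition path_ok :: "'a \<Rightarrow> 'a set list \<Rightarrow> 'a set list \<Rightarrow> bool" where
  "path_ok a r p \<longleftrightarrow> (\<forall>u. prefix r u \<and> prefix u p \<longrightarrow> a \<in> last u)"

definition peq :: "'a set list \<Rightarrow> 'a \<Rightarrow> 'a set list \<Rightarrow> 'a \<Rightarrow> bool" where
  "peq p a q b \<longleftrightarrow> a = b \<and> lcp p q \<noteq> [] \<and> path_ok a (lcp p q) p \<and> path_ok a (lcp p q) q"

definition cls :: "('a set \<Rightarrow> bool) \<Rightarrow> 'a set list \<Rightarrow> 'a \<Rightarrow> ('a set list \<times> 'a) set" where
  "cls good p a = {(q, b). fplay good q b \<and> peq p a q b}"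

definition Gk :: "guarding \<Rightarrow> nat \<Rightarrow> ('a, 'r) struc \<Rightarrow> (('a set list \<times> 'a) set, 'r) struc" where
  "Gk g k A =
     \<lparr> univ = {cls (kguarded g k A) p a | p a. fplay (kguarded g k A) p a},
       rel = (\<lambda>R. {map (cls (kguarded g k A) p) t | p t.
                      t \<in> rel A R \<and> play (kguarded g k A) p \<and> set t \<subseteq> last p}) \<rparr>"

definition eps :: "('a set list \<times> 'a) set \<Rightarrow> 'a" where
  "eps x = snd (SOME y. y \<in> x)"

text \<open>Functor action on f : A \<rightarrow> B: [p,a] maps to [f(p), f(a)] (B the codomain).\<close>
definition Gmap :: "guarding \<Rightarrow> nat \<Rightarrow> ('b, 'r) struc \<Rightarrow> ('a \<Rightarrow> 'b)
                     \<Rightarrow> ('a set list \<times> 'a) set \<Rightarrow> ('b set list \<times> 'b) set" where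
  "Gmap g k B f x = (let y = (SOME y. y \<in> x) in
      cls (kguarded g k B) (map ((`) f) (fst y)) (f (snd y)))"

text \<open>Comultiplication: [p,a] maps to [p*, [p,a]] where the i-th set of p* is
  {[p_i, b] | b in lambda(p_i)}, p_i the prefix of p of length i.\<close>
definition delta :: "guarding \<Rightarrow> nat \<Rightarrow> ('a, 'r) struc \<Rightarrow> ('a set list \<times> 'a) set
                      \<Rightarrow> (('a set list \<times> 'a) set set list \<times> ('a set list \<times> 'a) set) set" where
  "delta g k A x = (let y = (SOME y. y \<in> x); p = fst y; a = snd y in
      cls (kguarded g k (Gk g k A))
        (map (\<lambda>i. (\<lambda>b. cls (kguarded g k A) (take i p) b) ` last (take i p)) [1..<Suc (length p)])
        (cls (kguarded g k A) p a))"

definition coalgebra :: "guarding \<Rightarrow> nat \<Rightarrow> ('a, 'r) struc \<Rightarrow> ('a \<Rightarrow> ('a set list \<times> 'a) set) \<Rightarrow> bool" where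
  "coalgebra g k A \<alpha> \<longleftrightarrow> hom A (Gk g k A) \<alpha>
     \<and> (\<forall>a\<in>univ A. eps (\<alpha> a) = a)
     \<and> (\<forall>a\<in>univ A. Gmap g k (Gk g k A) \<alpha> (\<alpha> a) = delta g k A (\<alpha> a))"

definition coalgebra_number :: "guarding \<Rightarrow> ('a, 'r) struc \<Rightarrow> nat" where
  "coalgebra_number g A = (LEAST k. \<exists>\<alpha>. coalgebra g k A \<alpha>)"

definition gaifman_adj :: "('a, 'r) struc \<Rightarrow> 'a \<Rightarrow> 'a \<Rightarrow> bool" where
  "gaifman_adj A a b \<longleftrightarrow> a \<noteq> b \<and> (\<exists>R. \<exists>t\<in>rel A R. a \<in> set t \<and> b \<in> set t)"

definition guarded_decomp :: "guarding \<Rightarrow> ('a, 'r) struc \<Rightarrow> ('a \<Rightarrow> 'a set list) \<Rightarrow> bool" where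
  "guarded_decomp g A \<tau> \<longleftrightarrow>
     (\<forall>a\<in>univ A. play (guarded g A) (\<tau> a))
     \<and> (\<forall>a\<in>univ A. a \<in> last (\<tau> a))
     \<and> (\<forall>a\<in>univ A. \<forall>b\<in>univ A. gaifman_adj A a b \<longrightarrow> (\<exists>p\<in>\<tau> ` univ A. {a, b} \<subseteq> last p))
     \<and> (\<forall>a\<in>univ A. \<forall>q. fplay (guarded g A) q a \<and>
            cls (guarded g A) (\<tau> a) a = cls (guarded g A) q a \<longrightarrow> prefix (\<tau> a) q)
     \<and> (\<forall>a\<in>univ A. \<forall>q p. p \<in> \<tau> ` univ A \<and> prefix q p \<and> q \<noteq> [] \<and> a \<in> last q \<longrightarrow>
            cls (guarded g A) (\<tau> a) a = cls (guarded g A) q a)"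

definition k_bounded :: "nat \<Rightarrow> ('a, 'r) struc \<Rightarrow> ('a \<Rightarrow> 'a set list) \<Rightarrow> bool" where
  "k_bounded k A \<tau> \<longleftrightarrow> (\<forall>p\<in>\<tau> ` univ A. finite (last p) \<and> card (last p) \<le> k)"

definition guarded_treewidth :: "guarding \<Rightarrow> ('a, 'r) struc \<Rightarrow> nat" where
  "guarded_treewidth g A = (LEAST k. \<exists>\<tau>. guarded_decomp g A \<tau> \<and> k_bounded k A \<tau>)"

end

theory Submission
  imports Defs
begin

text \<open>
  A k-bounded decomposition \<tau> gives the coalgebra a \<mapsto> [\<tau> a, a]. By minimality and vertex
  connectivity, every element d of a set on a prefix q of some \<tau> c has \<tau> d below q, and d persists
  in all sets from the end of \<tau> d up to q. So all elements of such a set, and likewise (by edge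
  covering) all elements of a tuple, lie in the last set of \<tau> x0 for the element x0 with the longest
  play \<tau> x0. This bounds the sets along the plays \<tau> c by k and makes the coalgebra a homomorphism.
  On the sets of \<tau> a the coalgebra agrees with b \<mapsto> [q, b] for the corresponding prefix q, so the
  two lifts of a play that the comultiplication law compares agree up to \<tau> a.

  Conversely, for a coalgebra \<alpha> let \<tau> a be the shortest prefix of a representative play of \<alpha> a
  from which a persists to its end. At a, the comultiplication law says that the two lifts of this
  representative play agree up to \<tau> a, that is, \<alpha> b = [q, b] for every b in the last set of a
  prefix q of \<tau> a. This is vertex connectivity; minimality comes from taking the shortest prefix,
  and edge covering from \<alpha> mapping each tuple to a tuple of G_k A, which lies in the last set of a
  single play.
\<close>

lemma lcp_eq_longest_common_prefix: "lcp = longest_common_prefix"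
proof (intro ext)
  fix p q :: "'x list"
  show "lcp p q = longest_common_prefix p q"
    by (induction p q rule: lcp.induct) auto
qed

lemma prefix_take_length: "prefix r p \<Longrightarrow> r = take (length r) p"
  by (metis append_eq_conv_conj prefix_def)

lemma prefix_take_take: "m \<le> n \<Longrightarrow> prefix (take m p) (take n p)"
  using take_is_prefix[of m "take n p"] by (simp add: min_absorb1)

lemma in_set_iff_last_prefix: "S \<in> set p \<longleftrightarrow> (\<exists>q. prefix q p \<and> q \<noteq> [] \<and> S = last q)"
proof
  assume "S \<in> set p"
  then obtain i where "i < length p" "S = p ! i" by (metis in_set_conv_nth)
  then have "S = last (take (Suc i) p)"
    by (simp add: take_Suc_conv_app_nth)
  moreover have "take (Suc i) p \<noteq> []" using \<open>i < length p\<close> by (cases p) auto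
  ultimately show "\<exists>q. prefix q p \<and> q \<noteq> [] \<and> S = last q"
    using take_is_prefix by blast
qed (use set_mono_prefix in fastforce)

lemma prefix_chain_greatest:
  assumes "X \<noteq> {}" "finite (f ` X)"
    and chain: "\<And>x y. x \<in> X \<Longrightarrow> y \<in> X \<Longrightarrow> prefix (f x) (f y) \<or> prefix (f y) (f x)"
  obtains x0 where "x0 \<in> X" "\<And>x. x \<in> X \<Longrightarrow> prefix (f x) (f x0)"
proof -
  let ?L = "(\<lambda>x. length (f x)) ` X"
  have fin: "finite ?L"
    using finite_imageI[OF assms(2), of length] by (simp add: image_image)
  have "Max ?L \<in> ?L" using fin assms(1) by (intro Max_in) auto
  then obtain x0 where x0: "x0 \<in> X" "length (f x0) = Max ?L" by auto
  have "prefix (f x) (f x0)" if "x \<in> X" for x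
  proof -
    have "length (f x) \<le> length (f x0)" using Max_ge[OF fin] that x0(2) by simp
    then show ?thesis
      using chain[OF that x0(1)] prefix_length_prefix[of "f x" "f x" "f x0"] by auto
  qed
  with x0(1) show thesis by (rule that)
qed

section \<open>Persistence and the classes of focussed plays\<close>

definition persists :: "'a \<Rightarrow> 'a set list \<Rightarrow> 'a set list \<Rightarrow> bool" where
  "persists a r p \<longleftrightarrow> r \<noteq> [] \<and> prefix r p \<and> path_ok a r p"

lemma persists_iff_nth:
  "persists a r p \<longleftrightarrow>
     r \<noteq> [] \<and> prefix r p \<and> (\<forall>i. length r - 1 \<le> i \<and> i < length p \<longrightarrow> a \<in> p ! i)"
proof (cases "r \<noteq> [] \<and> prefix r p")
  case True
  then have r: "r \<noteq> []" "prefix r p" by auto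
  have "path_ok a r p \<longleftrightarrow> (\<forall>i. length r - 1 \<le> i \<and> i < length p \<longrightarrow> a \<in> p ! i)"
  proof
    assume ok: "path_ok a r p"
    show "\<forall>i. length r - 1 \<le> i \<and> i < length p \<longrightarrow> a \<in> p ! i"
    proof (intro allI impI)
      fix i assume i: "length r - 1 \<le> i \<and> i < length p"
      have "prefix r (take (Suc i) p)"
        using i r by (intro prefix_length_prefix[OF r(2) take_is_prefix]) auto
      with ok have "a \<in> last (take (Suc i) p)"
        unfolding path_ok_def using take_is_prefix by blast
      with i show "a \<in> p ! i" by (simp add: take_Suc_conv_app_nth)
    qed
  next
    assume nth: "\<forall>i. length r - 1 \<le> i \<and> i < length p \<longrightarrow> a \<in> p ! i"
    show "path_ok a r p"
      unfolding path_ok_def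
    proof (intro allI impI)
      fix u assume u: "prefix r u \<and> prefix u p"
      then have len: "length r \<le> length u" "length u \<le> length p"
        using prefix_length_le by auto
      have "u \<noteq> []" using u r(1) by auto
      then have idx: "length r - 1 \<le> length u - 1" "length u - 1 < length p"
        using len by (auto simp: diff_le_mono intro: Suc_le_lessD)
      have "last u = u ! (length u - 1)" using \<open>u \<noteq> []\<close> by (rule last_conv_nth)
      also have "\<dots> = take (length u) p ! (length u - 1)"
        using arg_cong[OF prefix_take_length, of u p "\<lambda>l. l ! (length u - 1)"] u by blast
      also have "\<dots> = p ! (length u - 1)" using \<open>u \<noteq> []\<close> by simp
      finally show "a \<in> last u" using nth idx by simp
    qed
  qed
  with True show ?thesis by (simp add: persists_def)
qed (auto simp: persists_def)

lemma persists_last: "persists a r p \<Longrightarrow> a \<in> last r"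
  unfolding persists_def path_ok_def by simp

lemma persists_refl: "p \<noteq> [] \<Longrightarrow> a \<in> last p \<Longrightarrow> persists a p p"
  unfolding persists_def path_ok_def using prefix_order.antisym by fastforce

lemma persists_later: "persists a r p \<Longrightarrow> prefix r s \<Longrightarrow> prefix s p \<Longrightarrow> persists a s p"
  unfolding persists_def path_ok_def by (meson Nil_prefix prefix_Nil prefix_order.trans)

lemma persists_mem_last: "persists a r p \<Longrightarrow> prefix r s \<Longrightarrow> prefix s p \<Longrightarrow> a \<in> last s"
  by (rule persists_last[OF persists_later])

lemma persists_truncate: "persists a r p \<Longrightarrow> prefix r s \<Longrightarrow> prefix s p \<Longrightarrow> persists a r s"
  unfolding persists_def path_ok_def by (meson prefix_order.trans)

lemma persists_glue:
  assumes r: "persists a r p" and s: "persists a s q" and "prefix r s" "prefix s p"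
  shows "persists a r q"
  unfolding persists_def path_ok_def
proof (intro conjI allI impI)
  have sq: "prefix s q" using s by (simp add: persists_def)
  then show "prefix r q" using \<open>prefix r s\<close> by (rule prefix_order.trans[rotated])
  show "r \<noteq> []" using r by (simp add: persists_def)
  fix u assume u: "prefix r u \<and> prefix u q"
  from prefix_same_cases[OF conjunct2[OF u] sq] show "a \<in> last u"
  proof
    assume "prefix u s"
    then have "prefix u p" using \<open>prefix s p\<close> by (rule prefix_order.trans)
    with r u show ?thesis unfolding persists_def path_ok_def by simp
  next
    assume "prefix s u"
    with s u show ?thesis unfolding persists_def path_ok_def by simp
  qed
qed

lemma peq_iff_persists: "peq p a q b \<longleftrightarrow> a = b \<and> (\<exists>r. persists a r p \<and> persists a r q)"
proof
  assume "peq p a q b"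
  then have "persists a (lcp p q) p" "persists a (lcp p q) q"
    unfolding peq_def persists_def lcp_eq_longest_common_prefix
    by (auto simp: longest_common_prefix_prefix1 longest_common_prefix_prefix2)
  with \<open>peq p a q b\<close> show "a = b \<and> (\<exists>r. persists a r p \<and> persists a r q)"
    unfolding peq_def by blast
next
  assume "a = b \<and> (\<exists>r. persists a r p \<and> persists a r q)"
  then obtain r where r: "a = b" "persists a r p" "persists a r q" by blast
  then have "prefix r (lcp p q)"
    unfolding lcp_eq_longest_common_prefix
    by (intro longest_common_prefix_max_prefix) (simp_all add: persists_def)
  then have "persists a (lcp p q) p" "persists a (lcp p q) q"
    unfolding lcp_eq_longest_common_prefix
    using persists_later[OF r(2) _ longest_common_prefix_prefix1]
      persists_later[OF r(3) _ longest_common_prefix_prefix2] by blast+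
  with r(1) show "peq p a q b"
    unfolding peq_def persists_def by blast
qed

lemma peq_of_persists:
  assumes "persists a r p"
  shows "peq r a p a"
proof -
  have "persists a r r"
    using persists_truncate[OF assms prefix_order.refl] assms by (simp add: persists_def)
  with assms show ?thesis unfolding peq_iff_persists by blast
qed

lemma peq_prefix_persists:
  assumes "peq p a q a" "prefix p q"
  shows "persists a p q"
proof -
  obtain r where r: "persists a r p" "persists a r q"
    using assms(1) unfolding peq_iff_persists by blast
  have "prefix r p" using r(1) by (simp add: persists_def)
  with r(2) show ?thesis using assms(2) by (rule persists_later)
qed

lemma peq_sym: "peq p a q b \<Longrightarrow> peq q b p a"
  by (auto simp: peq_iff_persists)

lemma peq_trans:
  assumes "peq p a q b" "peq q b s c"
  shows "peq p a s c"
proof -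
  obtain r where r: "a = b" "persists a r p" "persists a r q"
    using assms(1) unfolding peq_iff_persists by blast
  obtain r' where r': "b = c" "persists a r' q" "persists a r' s"
    using assms(2) r(1) unfolding peq_iff_persists by blast
  have rq: "prefix r q" and r'q: "prefix r' q" using r(3) r'(2) by (simp_all add: persists_def)
  from prefix_same_cases[OF rq r'q] show ?thesis
  proof
    assume "prefix r r'"
    with r r' show ?thesis
      using persists_glue[OF r(3) r'(3) _ r'q] unfolding peq_iff_persists by blast
  next
    assume "prefix r' r"
    with r r' show ?thesis
      using persists_glue[OF r'(2) r(2) _ rq] unfolding peq_iff_persists by blast
  qed
qed

lemma cls_eqI:
  assumes "peq p a q a"
  shows "cls good p a = cls good q a"
proof -
  have "peq p a s b \<longleftrightarrow> peq q a s b" for s b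
    using peq_trans[OF assms] peq_trans[OF peq_sym[OF assms]] by blast
  then show ?thesis by (simp add: cls_def)
qed

lemma mem_cls_self:
  assumes "fplay good p a"
  shows "(p, a) \<in> cls good p a"
proof -
  have "persists a p p"
    using assms by (intro persists_refl) (simp_all add: fplay_def play_def)
  with assms show ?thesis unfolding cls_def peq_iff_persists by blast
qed

lemma cls_eqD:
  assumes "cls good p a = cls good q a" "fplay good q a"
  shows "peq p a q a"
proof -
  have "(q, a) \<in> cls good p a" using mem_cls_self[OF assms(2)] assms(1) by simp
  then show ?thesis by (simp add: cls_def)
qed

lemma some_mem_clsE:
  assumes "fplay good p a"
  obtains q where "(SOME y. y \<in> cls good p a) = (q, a)" "fplay good q a" "peq p a q a"
proof -
  have "(SOME y. y \<in> cls good p a) \<in> cls good p a"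
    using mem_cls_self[OF assms] by (rule someI)
  then show thesis
    using that unfolding cls_def peq_def by auto
qed

lemma eps_cls:
  assumes "fplay good p a"
  shows "eps (cls good p a) = a"
proof -
  obtain q where "(SOME y. y \<in> cls good p a) = (q, a)"
    using some_mem_clsE[OF assms] by blast
  then show ?thesis by (simp add: eps_def)
qed

definition root :: "'a set list \<Rightarrow> 'a \<Rightarrow> 'a set list" where
  "root p a = take (LEAST n. persists a (take n p) p) p"

lemma root_persists:
  assumes "p \<noteq> []" "a \<in> last p"
  shows "persists a (root p a) p"
proof -
  have "persists a (take (length p) p) p" using persists_refl[OF assms] by simp
  then show ?thesis unfolding root_def by (rule LeastI)
qed

lemma root_least:
  assumes "persists a r p"
  shows "prefix (root p a) r"
proof -
  have r: "r = take (length r) p"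
    using assms by (simp add: persists_def prefix_take_length)
  with assms have "(LEAST n. persists a (take n p) p) \<le> length r"
    by (intro Least_le) simp
  then show ?thesis
    unfolding root_def by (subst r) (rule prefix_take_take)
qed

lemma root_persists_peq:
  assumes "peq p a q a" "p \<noteq> []" "a \<in> last p"
  shows "persists a (root p a) q"
proof -
  obtain r where r: "persists a r p" "persists a r q"
    using assms(1) unfolding peq_iff_persists by blast
  have "prefix r p" using r(1) by (simp add: persists_def)
  with root_persists[OF assms(2,3)] r(2) root_least[OF r(1)] show ?thesis
    by (rule persists_glue)
qed

section \<open>The lifted play of the comultiplication\<close>

definition pstar :: "('a set \<Rightarrow> bool) \<Rightarrow> 'a set list \<Rightarrow> ('a set list \<times> 'a) set set list" where
  "pstar good p = map (\<lambda>i. (\<lambda>b. cls good (take i p) b) ` last (take i p)) [1..<Suc (length p)]"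

lemma length_pstar [simp]: "length (pstar good p) = length p"
  by (simp add: pstar_def del: upt_Suc)

lemma nth_pstar: "i < length p \<Longrightarrow> pstar good p ! i = cls good (take (Suc i) p) ` (p ! i)"
proof -
  assume i: "i < length p"
  then have "pstar good p ! i = cls good (take (Suc i) p) ` last (take (Suc i) p)"
    by (simp add: pstar_def del: upt_Suc)
  also have "last (take (Suc i) p) = p ! i"
    using i by (simp add: take_Suc_conv_app_nth)
  finally show ?thesis .
qed

lemma take_pstar: "take j (pstar good p) = pstar good (take j p)"
proof (rule nth_equalityI)
  fix i assume "i < length (take j (pstar good p))"
  then have "i < j" "i < length p" by simp_all
  then show "take j (pstar good p) ! i = pstar good (take j p) ! i"
    by (simp add: nth_pstar)
qed simp

lemma last_pstar:
  assumes "p \<noteq> []"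
  shows "last (pstar good p) = cls good p ` last p"
proof -
  have "pstar good p \<noteq> []" using assms by (metis length_0_conv length_pstar)
  then have "last (pstar good p) = pstar good p ! (length p - 1)"
    by (simp add: last_conv_nth)
  also have "\<dots> = cls good p ` last p"
    using assms by (simp add: nth_pstar last_conv_nth)
  finally show ?thesis .
qed

lemma persists_pstar:
  assumes "persists a r p"
  shows "persists (cls good r a) (pstar good r) (pstar good p)"
  unfolding persists_iff_nth
proof (intro conjI allI impI)
  have r: "r \<noteq> []" "prefix r p" using assms by (simp_all add: persists_def)
  then show "pstar good r \<noteq> []" by (metis length_0_conv length_pstar)
  have "pstar good r = take (length r) (pstar good p)"
    by (subst prefix_take_length[OF r(2)]) (simp add: take_pstar)
  then show "prefix (pstar good r) (pstar good p)" by (simp add: take_is_prefix)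
  fix i assume i: "length (pstar good r) - 1 \<le> i \<and> i < length (pstar good p)"
  then have "a \<in> p ! i" using assms by (simp add: persists_iff_nth)
  have "prefix r (take (Suc i) p)"
    using i r by (intro prefix_length_prefix[OF r(2) take_is_prefix]) auto
  then have "persists a r (take (Suc i) p)"
    using persists_truncate[OF assms _ take_is_prefix] by blast
  then have "cls good r a = cls good (take (Suc i) p) a"
    by (intro cls_eqI peq_of_persists)
  with \<open>a \<in> p ! i\<close> i show "cls good r a \<in> pstar good p ! i" by (simp add: nth_pstar)
qed

lemma persists_map_image:
  "persists a r p \<Longrightarrow> persists (f a) (map ((`) f) r) (map ((`) f) p)"
  by (simp add: persists_iff_nth map_mono_prefix)

lemma Gmap_eq:
  "(SOME y. y \<in> x) = (p, a) \<Longrightarrow> Gmap g k B f x = cls (kguarded g k B) (map ((`) f) p) (f a)"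
  by (simp add: Gmap_def)

lemma delta_eq:
  "(SOME y. y \<in> x) = (p, a) \<Longrightarrow>
    delta g k A x = cls (kguarded g k (Gk g k A)) (pstar (kguarded g k A) p) (cls (kguarded g k A) p a)"
  by (simp add: delta_def pstar_def)

lemma guarded_subset_univ: "wf_struc ar A \<Longrightarrow> guarded g A S \<Longrightarrow> S \<subseteq> univ A"
  by (cases g) (auto simp: atom_guarded_def loose_guarded_def wf_struc_def)

lemma atom_guarded_hom_image:
  assumes "hom A B f" "atom_guarded A S"
  shows "atom_guarded B (f ` S)"
  using assms(2) unfolding atom_guarded_def
proof (elim disjE bexE exE)
  fix a assume "a \<in> univ A" "S = {a}"
  with assms(1) show "(\<exists>b\<in>univ B. f ` S = {b}) \<or> (\<exists>R. \<exists>t\<in>rel B R. f ` S = set t)"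
    unfolding hom_def by auto
next
  fix R t assume "t \<in> rel A R" "S = set t"
  with assms(1) have "map f t \<in> rel B R" "f ` S = set (map f t)"
    unfolding hom_def by auto
  then show "(\<exists>b\<in>univ B. f ` S = {b}) \<or> (\<exists>R. \<exists>t\<in>rel B R. f ` S = set t)" by blast
qed

lemma guarded_hom_image:
  assumes f: "hom A B f" and S: "guarded g A S"
  shows "guarded g B (f ` S)"
proof (cases g)
  case AtomG
  with assms show ?thesis by (simp add: atom_guarded_hom_image)
next
  case LooseG
  then have S: "loose_guarded A S" using S by simp
  have "f ` S \<subseteq> univ B" using f S unfolding hom_def loose_guarded_def by blast
  moreover have "\<exists>T'. atom_guarded B T' \<and> {x, y} \<subseteq> T'" if xy: "x \<in> f ` S" "y \<in> f ` S" for x y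
  proof -
    obtain a b where ab: "a \<in> S" "b \<in> S" "x = f a" "y = f b" using xy by blast
    then obtain T where "atom_guarded A T" "{a, b} \<subseteq> T"
      using S unfolding loose_guarded_def by blast
    with ab show ?thesis using atom_guarded_hom_image[OF f] by blast
  qed
  ultimately show ?thesis using LooseG by (simp add: loose_guarded_def)
qed

lemma kguarded_hom_image:
  assumes "hom A B f" "kguarded g k A S"
  shows "kguarded g k B (f ` S)"
proof -
  have "card (f ` S) \<le> k"
    using assms(2) card_image_le[of S f] unfolding kguarded_def by linarith
  with assms show ?thesis by (simp add: kguarded_def guarded_hom_image)
qed

lemma play_mono: "(\<And>S. P S \<Longrightarrow> Q S) \<Longrightarrow> play P p \<Longrightarrow> play Q p"
  unfolding play_def by blast

lemma play_prefix: "play P p \<Longrightarrow> prefix q p \<Longrightarrow> q \<noteq> [] \<Longrightarrow> play P q"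
  unfolding play_def by (meson set_mono_prefix subsetD)

lemma play_last: "play P p \<Longrightarrow> P (last p)"
  unfolding play_def by simp

lemma play_hom_image:
  assumes "hom A B f" "play (kguarded g k A) p"
  shows "play (kguarded g k B) (map ((`) f) p)"
  using assms(2) kguarded_hom_image[OF assms(1)] unfolding play_def by auto

lemma kguarded_empty:
  assumes "[] \<in> rel A R"
  shows "kguarded g k A {}"
proof -
  have "atom_guarded A {}" using assms unfolding atom_guarded_def by force
  then show ?thesis by (cases g) (simp_all add: kguarded_def loose_guarded_def)
qed

lemma cls_in_Gk_univ:
  "fplay (kguarded g k A) p a \<Longrightarrow> cls (kguarded g k A) p a \<in> univ (Gk g k A)"
  unfolding Gk_def by auto

lemma Gk_univE:
  assumes "x \<in> univ (Gk g k A)"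
  obtains p a where "x = cls (kguarded g k A) p a" "fplay (kguarded g k A) p a"
  using assms unfolding Gk_def by auto

lemma map_cls_in_Gk_rel:
  "t \<in> rel A R \<Longrightarrow> play (kguarded g k A) p \<Longrightarrow> set t \<subseteq> last p \<Longrightarrow>
    map (cls (kguarded g k A) p) t \<in> rel (Gk g k A) R"
  unfolding Gk_def by auto

lemma Gk_relE:
  assumes "x \<in> rel (Gk g k A) R"
  obtains p t where "x = map (cls (kguarded g k A) p) t" "t \<in> rel A R"
    "play (kguarded g k A) p" "set t \<subseteq> last p"
  using assms unfolding Gk_def by auto

section \<open>From bounded guarded decompositions to coalgebras\<close>

locale bounded_guarded_decomp =
  fixes ar :: "'r \<Rightarrow> nat" and g :: guarding and k :: nat and A :: "('a, 'r) struc"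
    and \<tau> :: "'a \<Rightarrow> 'a set list"
  assumes wf: "wf_struc ar A"
    and decomp: "guarded_decomp g A \<tau>"
    and bounded: "k_bounded k A \<tau>"
begin

abbreviation "K \<equiv> kguarded g k A"

lemma tau_play: "a \<in> univ A \<Longrightarrow> play (guarded g A) (\<tau> a)"
  using decomp by (simp add: guarded_decomp_def)

lemma mem_last_tau: "a \<in> univ A \<Longrightarrow> a \<in> last (\<tau> a)"
  using decomp by (simp add: guarded_decomp_def)

lemma edge_covered:
  "a \<in> univ A \<Longrightarrow> b \<in> univ A \<Longrightarrow> gaifman_adj A a b \<Longrightarrow> \<exists>c\<in>univ A. {a, b} \<subseteq> last (\<tau> c)"
  using decomp unfolding guarded_decomp_def by (simp add: image_iff)

lemma tau_minimal:
  "a \<in> univ A \<Longrightarrow> fplay (guarded g A) q a \<Longrightarrow>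
    cls (guarded g A) (\<tau> a) a = cls (guarded g A) q a \<Longrightarrow> prefix (\<tau> a) q"
  using decomp unfolding guarded_decomp_def by simp

lemma vertex_connected:
  assumes "a \<in> univ A" "c \<in> univ A" "prefix q (\<tau> c)" "q \<noteq> []" "a \<in> last q"
  shows "cls (guarded g A) (\<tau> a) a = cls (guarded g A) q a"
proof -
  have "\<forall>a\<in>univ A. \<forall>q p. p \<in> \<tau> ` univ A \<and> prefix q p \<and> q \<noteq> [] \<and> a \<in> last q \<longrightarrow>
      cls (guarded g A) (\<tau> a) a = cls (guarded g A) q a"
    using decomp unfolding guarded_decomp_def by (elim conjE) assumption
  with assms show ?thesis by blast
qed

lemma tau_ne: "a \<in> univ A \<Longrightarrow> \<tau> a \<noteq> []"
  using tau_play by (simp add: play_def)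

lemma persists_tau:
  assumes c: "c \<in> univ A" and q: "prefix q (\<tau> c)" "q \<noteq> []" and d: "d \<in> last q"
  shows "d \<in> univ A" "persists d (\<tau> d) q"
proof -
  have q_play: "play (guarded g A) q" using play_prefix[OF tau_play[OF c] q] .
  then show du: "d \<in> univ A"
    using guarded_subset_univ[OF wf play_last[OF q_play]] d by blast
  have fq: "fplay (guarded g A) q d" using q_play d by (simp add: fplay_def)
  have eq: "cls (guarded g A) (\<tau> d) d = cls (guarded g A) q d"
    using vertex_connected[OF du c q d] .
  show "persists d (\<tau> d) q"
    using cls_eqD[OF eq fq] tau_minimal[OF du fq eq] by (rule peq_prefix_persists)
qed

lemma ex_covering_tau:
  assumes "X \<noteq> {}" "finite (\<tau> ` X)"
    and co: "\<And>x y. x \<in> X \<Longrightarrow> y \<in> X \<Longrightarrow>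
              \<exists>c\<in>univ A. \<exists>q. prefix q (\<tau> c) \<and> q \<noteq> [] \<and> x \<in> last q \<and> y \<in> last q"
  shows "\<exists>x0\<in>X. X \<subseteq> last (\<tau> x0)"
proof -
  have below: "persists x (\<tau> x) q \<and> persists y (\<tau> y) q \<and> prefix (\<tau> x) q \<and> prefix (\<tau> y) q"
    if "c \<in> univ A" "prefix q (\<tau> c)" "q \<noteq> []" "x \<in> last q" "y \<in> last q" for x y c q
    using persists_tau[OF that(1-3)] that(4,5) by (simp add: persists_def)
  have comparable: "prefix (\<tau> x) (\<tau> y) \<or> prefix (\<tau> y) (\<tau> x)" if xy: "x \<in> X" "y \<in> X" for x y
  proof -
    obtain c q where "c \<in> univ A" "prefix q (\<tau> c)" "q \<noteq> []" "x \<in> last q" "y \<in> last q"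
      using co[OF xy] by blast
    with below have "prefix (\<tau> x) q" "prefix (\<tau> y) q" by blast+
    then show ?thesis by (rule prefix_same_cases)
  qed
  obtain x0 where x0: "x0 \<in> X" "\<And>x. x \<in> X \<Longrightarrow> prefix (\<tau> x) (\<tau> x0)"
    using prefix_chain_greatest[OF assms(1,2) comparable] by blast
  have "x \<in> last (\<tau> x0)" if x: "x \<in> X" for x
  proof -
    obtain c q where cq: "c \<in> univ A" "prefix q (\<tau> c)" "q \<noteq> []" "x \<in> last q" "x0 \<in> last q"
      using co[OF x x0(1)] by blast
    with below[OF cq] show ?thesis
      using persists_mem_last[OF _ x0(2)[OF x]] by blast
  qed
  with x0(1) show ?thesis by blast
qed

lemma kplay_tau:
  assumes c: "c \<in> univ A"
  shows "play K (\<tau> c)"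
  unfolding play_def
proof (intro conjI ballI)
  show "\<tau> c \<noteq> []" using tau_ne[OF c] .
  fix S assume S: "S \<in> set (\<tau> c)"
  then obtain q where q: "prefix q (\<tau> c)" "q \<noteq> []" "S = last q"
    unfolding in_set_iff_last_prefix by blast
  have "finite S \<and> card S \<le> k"
  proof (cases "S = {}")
    case False
    have "\<tau> ` S \<subseteq> set (prefixes q)"
      using persists_tau(2)[OF c q(1,2)] q(3) by (auto simp: persists_def)
    then have "finite (\<tau> ` S)" by (rule finite_subset) simp
    moreover have "\<exists>c'\<in>univ A. \<exists>q'. prefix q' (\<tau> c') \<and> q' \<noteq> [] \<and> x \<in> last q' \<and> y \<in> last q'"
      if "x \<in> S" "y \<in> S" for x y
      using c q that by blast
    ultimately obtain x0 where x0: "x0 \<in> S" "S \<subseteq> last (\<tau> x0)"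
      using ex_covering_tau[OF False] by blast
    have "x0 \<in> univ A" using persists_tau(1)[OF c q(1,2)] x0(1) q(3) by blast
    then have "finite (last (\<tau> x0)) \<and> card (last (\<tau> x0)) \<le> k"
      using bounded by (simp add: k_bounded_def)
    with x0(2) show ?thesis by (meson card_mono finite_subset le_trans)
  qed simp
  moreover have "guarded g A S" using tau_play[OF c] S by (simp add: play_def)
  ultimately show "K S" by (simp add: kguarded_def)
qed

lemma tuple_pair_in_bag:
  assumes t: "t \<in> rel A R" and xy: "x \<in> set t" "y \<in> set t"
  shows "\<exists>c\<in>univ A. {x, y} \<subseteq> last (\<tau> c)"
proof -
  have u: "x \<in> univ A" "y \<in> univ A" using wf t xy by (auto simp: wf_struc_def)
  show ?thesis
  proof (cases "x = y")
    case True
    with u show ?thesis using mem_last_tau by blast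
  next
    case False
    with t xy have "gaifman_adj A x y" by (auto simp: gaifman_adj_def)
    with u show ?thesis by (rule edge_covered)
  qed
qed

definition \<alpha> :: "'a \<Rightarrow> ('a set list \<times> 'a) set" where
  "\<alpha> a = cls K (\<tau> a) a"

lemma fplay_tau: "a \<in> univ A \<Longrightarrow> fplay K (\<tau> a) a"
  using kplay_tau mem_last_tau by (simp add: fplay_def)

lemma alpha_eq_cls:
  assumes "c \<in> univ A" "prefix q (\<tau> c)" "q \<noteq> []" "d \<in> last q"
  shows "\<alpha> d = cls K q d"
  unfolding \<alpha>_def using persists_tau(2)[OF assms] by (intro cls_eqI peq_of_persists)

lemma hom_alpha: "hom A (Gk g k A) \<alpha>"
  unfolding hom_def
proof (intro conjI ballI allI)
  fix a assume "a \<in> univ A"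
  then show "\<alpha> a \<in> univ (Gk g k A)" unfolding \<alpha>_def by (intro cls_in_Gk_univ fplay_tau)
next
  fix R t assume t: "t \<in> rel A R"
  show "map \<alpha> t \<in> rel (Gk g k A) R"
  proof (cases "t = []")
    case True
    then have "play K [{}]" using kguarded_empty t by (simp add: play_def)
    from map_cls_in_Gk_rel[OF t this] True show ?thesis by simp
  next
    case False
    have tu: "set t \<subseteq> univ A" using wf t by (simp add: wf_struc_def)
    have "\<exists>c\<in>univ A. \<exists>q. prefix q (\<tau> c) \<and> q \<noteq> [] \<and> x \<in> last q \<and> y \<in> last q"
      if "x \<in> set t" "y \<in> set t" for x y
      using tuple_pair_in_bag[OF t that] tau_ne by blast
    then obtain x0 where x0: "x0 \<in> set t" "set t \<subseteq> last (\<tau> x0)"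
      using ex_covering_tau[of "set t"] False by auto
    have x0u: "x0 \<in> univ A" using x0(1) tu by blast
    have "map \<alpha> t = map (cls K (\<tau> x0)) t"
      using alpha_eq_cls[OF x0u prefix_order.refl tau_ne[OF x0u]] x0(2) by auto
    also have "\<dots> \<in> rel (Gk g k A) R"
      by (rule map_cls_in_Gk_rel[OF t kplay_tau[OF x0u] x0(2)])
    finally show ?thesis .
  qed
qed

lemma eps_alpha: "a \<in> univ A \<Longrightarrow> eps (\<alpha> a) = a"
  unfolding \<alpha>_def by (rule eps_cls[OF fplay_tau])

lemma map_alpha_tau:
  assumes a: "a \<in> univ A"
  shows "map ((`) \<alpha>) (\<tau> a) = pstar K (\<tau> a)"
proof (rule nth_equalityI)
  fix i assume "i < length (map ((`) \<alpha>) (\<tau> a))"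
  then have i: "i < length (\<tau> a)" by simp
  have q: "prefix (take (Suc i) (\<tau> a)) (\<tau> a)" "take (Suc i) (\<tau> a) \<noteq> []"
    using i take_is_prefix by (auto simp: take_eq_Nil)
  have "last (take (Suc i) (\<tau> a)) = \<tau> a ! i"
    using i by (simp add: take_Suc_conv_app_nth)
  have "\<alpha> ` (\<tau> a ! i) = cls K (take (Suc i) (\<tau> a)) ` (\<tau> a ! i)"
    using alpha_eq_cls[OF a q] \<open>last (take (Suc i) (\<tau> a)) = \<tau> a ! i\<close> by auto
  with i show "map ((`) \<alpha>) (\<tau> a) ! i = pstar K (\<tau> a) ! i" by (simp add: nth_pstar)
qed simp

lemma alpha_comult:
  assumes a: "a \<in> univ A"
  shows "Gmap g k (Gk g k A) \<alpha> (\<alpha> a) = delta g k A (\<alpha> a)"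
proof -
  obtain q where rep: "(SOME y. y \<in> \<alpha> a) = (q, a)" "fplay K q a" "peq (\<tau> a) a q a"
    using some_mem_clsE[OF fplay_tau[OF a], folded \<alpha>_def] by blast
  have alpha_q: "\<alpha> a = cls K q a" unfolding \<alpha>_def using rep(3) by (rule cls_eqI)
  have "fplay (guarded g A) q a"
    using rep(2) play_mono[of K "guarded g A"] by (simp add: fplay_def kguarded_def)
  then have "prefix (\<tau> a) q" using tau_minimal[OF a] cls_eqI[OF rep(3)] by blast
  with rep(3) have pers: "persists a (\<tau> a) q" by (rule peq_prefix_persists)
  have "persists (\<alpha> a) (pstar K (\<tau> a)) (map ((`) \<alpha>) q)"
    using persists_map_image[OF pers, of \<alpha>] by (simp add: map_alpha_tau[OF a])
  moreover have "persists (\<alpha> a) (pstar K (\<tau> a)) (pstar K q)"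
    using persists_pstar[OF pers] by (simp add: \<alpha>_def)
  ultimately have "peq (map ((`) \<alpha>) q) (\<alpha> a) (pstar K q) (\<alpha> a)"
    unfolding peq_iff_persists by blast
  then have "cls (kguarded g k (Gk g k A)) (map ((`) \<alpha>) q) (\<alpha> a)
      = cls (kguarded g k (Gk g k A)) (pstar K q) (\<alpha> a)"
    by (rule cls_eqI)
  then show ?thesis
    unfolding Gmap_eq[OF rep(1)] delta_eq[OF rep(1)] alpha_q[symmetric] .
qed

lemma coalgebra_alpha: "coalgebra g k A \<alpha>"
  unfolding coalgebra_def using hom_alpha eps_alpha alpha_comult by blast

end

lemma bounded_guarded_decomp_imp_coalgebra:
  assumes "wf_struc ar A" "guarded_decomp g A \<tau>" "k_bounded k A \<tau>"
  shows "\<exists>\<alpha>. coalgebra g k A \<alpha>"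
proof -
  interpret bounded_guarded_decomp ar g k A \<tau> using assms by unfold_locales
  show ?thesis using coalgebra_alpha by blast
qed

section \<open>From coalgebras to bounded guarded decompositions\<close>

locale guarded_coalgebra =
  fixes ar :: "'r \<Rightarrow> nat" and g :: guarding and k :: nat and A :: "('a, 'r) struc"
    and \<alpha> :: "'a \<Rightarrow> ('a set list \<times> 'a) set"
  assumes wf: "wf_struc ar A"
    and coalg: "coalgebra g k A \<alpha>"
begin

abbreviation "K \<equiv> kguarded g k A"

lemma hom_alpha: "hom A (Gk g k A) \<alpha>"
  using coalg by (simp add: coalgebra_def)

lemma eps_alpha: "a \<in> univ A \<Longrightarrow> eps (\<alpha> a) = a"
  using coalg by (simp add: coalgebra_def)

lemma alpha_comult: "a \<in> univ A \<Longrightarrow> Gmap g k (Gk g k A) \<alpha> (\<alpha> a) = delta g k A (\<alpha> a)"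
  using coalg by (simp add: coalgebra_def)

lemma alpha_eq_clsD: "b \<in> univ A \<Longrightarrow> \<alpha> b = cls K q b' \<Longrightarrow> fplay K q b' \<Longrightarrow> b' = b"
  using eps_cls[of K q b'] eps_alpha[of b] by simp

definition rep_play :: "'a \<Rightarrow> 'a set list" where
  "rep_play a = fst (SOME y. y \<in> \<alpha> a)"

definition \<tau> :: "'a \<Rightarrow> 'a set list" where
  "\<tau> a = root (rep_play a) a"

lemma rep_play_spec:
  assumes a: "a \<in> univ A"
  shows "(SOME y. y \<in> \<alpha> a) = (rep_play a, a)" "fplay K (rep_play a) a"
    "\<alpha> a = cls K (rep_play a) a"
proof -
  have "\<alpha> a \<in> univ (Gk g k A)" using hom_alpha a by (simp add: hom_def)
  then obtain p a' where p: "\<alpha> a = cls K p a'" "fplay K p a'" by (rule Gk_univE)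
  with a have "a' = a" by (rule alpha_eq_clsD)
  with p have pa: "\<alpha> a = cls K p a" "fplay K p a" by simp_all
  obtain q where q: "(SOME y. y \<in> \<alpha> a) = (q, a)" "fplay K q a" "peq p a q a"
    using some_mem_clsE[OF pa(2)] unfolding pa(1) by blast
  then show "(SOME y. y \<in> \<alpha> a) = (rep_play a, a)" "fplay K (rep_play a) a"
    by (simp_all add: rep_play_def)
  have "\<alpha> a = cls K q a" using pa(1) cls_eqI[OF q(3)] by simp
  with q(1) show "\<alpha> a = cls K (rep_play a) a" by (simp add: rep_play_def)
qed

lemma rep_play_ne: "a \<in> univ A \<Longrightarrow> rep_play a \<noteq> []"
  using rep_play_spec(2) unfolding fplay_def play_def by blast

lemma mem_last_rep_play: "a \<in> univ A \<Longrightarrow> a \<in> last (rep_play a)"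
  using rep_play_spec(2) unfolding fplay_def by blast

lemma tau_persists: "a \<in> univ A \<Longrightarrow> persists a (\<tau> a) (rep_play a)"
  unfolding \<tau>_def using rep_play_ne mem_last_rep_play by (rule root_persists)

lemma kplay_tau:
  assumes "a \<in> univ A"
  shows "play K (\<tau> a)"
proof (rule play_prefix)
  show "play K (rep_play a)" using rep_play_spec(2)[OF assms] by (simp add: fplay_def)
  show "prefix (\<tau> a) (rep_play a)" "\<tau> a \<noteq> []"
    using tau_persists[OF assms] by (simp_all add: persists_def)
qed

lemma mem_last_tau: "a \<in> univ A \<Longrightarrow> a \<in> last (\<tau> a)"
  using tau_persists by (rule persists_last)

lemma peq_tau_rep_play: "a \<in> univ A \<Longrightarrow> peq (\<tau> a) a (rep_play a) a"
  using tau_persists by (rule peq_of_persists)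

lemma alpha_eq_cls_tau: "a \<in> univ A \<Longrightarrow> \<alpha> a = cls K (\<tau> a) a"
  using rep_play_spec(3) cls_eqI[OF peq_tau_rep_play] by simp

lemma tau_least:
  assumes a: "a \<in> univ A" and "peq (\<tau> a) a q a"
  shows "persists a (\<tau> a) q"
proof -
  have "peq (rep_play a) a q a"
    using peq_trans[OF peq_sym[OF peq_tau_rep_play[OF a]] assms(2)] .
  then show ?thesis
    unfolding \<tau>_def using rep_play_ne[OF a] mem_last_rep_play[OF a] by (rule root_persists_peq)
qed

lemma tau_least_cls:
  assumes "a \<in> univ A" "fplay K q a" "\<alpha> a = cls K q a"
  shows "persists a (\<tau> a) q"
proof -
  have "cls K (\<tau> a) a = cls K q a" using assms(1,3) alpha_eq_cls_tau by simp
  then have "peq (\<tau> a) a q a" using assms(2) by (rule cls_eqD)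
  then show ?thesis by (rule tau_least[OF assms(1)])
qed

lemma lifts_of_rep_play_agree:
  assumes c: "c \<in> univ A"
  obtains j where "prefix (\<tau> c) (take j (rep_play c))"
    "take j (map ((`) \<alpha>) (rep_play c)) = take j (pstar K (rep_play c))"
proof -
  let ?KK = "kguarded g k (Gk g k A)"
  define p where "p = rep_play c"
  have p: "(SOME y. y \<in> \<alpha> c) = (p, c)" "fplay K p c" "\<alpha> c = cls K p c"
    using rep_play_spec[OF c] unfolding p_def by blast+
  have "cls ?KK (pstar K p) (\<alpha> c) = cls ?KK (map ((`) \<alpha>) p) (\<alpha> c)"
    using alpha_comult[OF c] unfolding Gmap_eq[OF p(1)] delta_eq[OF p(1)] p(3)[symmetric] by simp
  moreover have "fplay ?KK (map ((`) \<alpha>) p) (\<alpha> c)"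
    using play_hom_image[OF hom_alpha] p(2) by (auto simp: fplay_def play_def last_map)
  ultimately have "peq (pstar K p) (\<alpha> c) (map ((`) \<alpha>) p) (\<alpha> c)" by (rule cls_eqD)
  then obtain r where r: "persists (\<alpha> c) r (pstar K p)" "persists (\<alpha> c) r (map ((`) \<alpha>) p)"
    unfolding peq_iff_persists by blast
  define j where "j = length r"
  have r_take: "r = take j (pstar K p)" "r = take j (map ((`) \<alpha>) p)"
    using r prefix_take_length unfolding j_def persists_def by blast+
  then have r_pstar: "r = pstar K (take j p)" by (simp add: take_pstar)
  have "take j p \<noteq> []"
  proof
    assume "take j p = []"
    with r_pstar r(1) show False by (simp add: persists_def pstar_def)
  qed
  have "\<alpha> c \<in> last r" using r(1) by (rule persists_last)
  then obtain c' where c': "c' \<in> last (take j p)" "\<alpha> c = cls K (take j p) c'"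
    using last_pstar[OF \<open>take j p \<noteq> []\<close>] r_pstar by auto
  have "fplay K (take j p) c'"
    using play_prefix[OF _ take_is_prefix \<open>take j p \<noteq> []\<close>] p(2) c'(1) by (simp add: fplay_def)
  moreover from this have "c' = c" using alpha_eq_clsD[OF c c'(2)] by simp
  ultimately have "persists c (\<tau> c) (take j p)" using tau_least_cls[OF c] c'(2) by simp
  then have "prefix (\<tau> c) (take j p)" by (simp add: persists_def)
  moreover have "take j (map ((`) \<alpha>) p) = take j (pstar K p)" using r_take by simp
  ultimately show thesis unfolding p_def by (rule that)
qed

lemma map_alpha_tau:
  assumes c: "c \<in> univ A"
  shows "map ((`) \<alpha>) (\<tau> c) = pstar K (\<tau> c)"
proof -
  obtain j where j: "prefix (\<tau> c) (take j (rep_play c))"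
    "take j (map ((`) \<alpha>) (rep_play c)) = take j (pstar K (rep_play c))"
    using lifts_of_rep_play_agree[OF c] by blast
  let ?l = "length (\<tau> c)"
  have "prefix (\<tau> c) (rep_play c)" using j(1) take_is_prefix by (rule prefix_order.trans)
  then have tau: "\<tau> c = take ?l (rep_play c)" by (rule prefix_take_length)
  have "?l \<le> j" using prefix_length_le[OF j(1)] by simp
  then have "take ?l (map ((`) \<alpha>) (rep_play c)) = take ?l (pstar K (rep_play c))"
    using arg_cong[OF j(2), of "take ?l"] by (simp add: min_absorb1)
  then show ?thesis by (subst (1 2) tau) (simp add: take_map take_pstar)
qed

lemma alpha_eq_cls:
  assumes c: "c \<in> univ A" and q: "prefix q (\<tau> c)" "q \<noteq> []" and b: "b \<in> last q"
  shows "\<alpha> b = cls K q b"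
proof -
  have "map ((`) \<alpha>) q = pstar K q"
    using arg_cong[OF map_alpha_tau[OF c], of "take (length q)"] prefix_take_length[OF q(1)]
    by (simp add: take_map take_pstar)
  then have "\<alpha> ` last q = cls K q ` last q"
    using last_pstar[OF q(2)] q(2) by (metis last_map)
  then obtain b' where b': "b' \<in> last q" "\<alpha> b = cls K q b'"
    using b by blast
  have "play K q" using play_prefix[OF kplay_tau[OF c] q] .
  then have "fplay K q b'" using b'(1) by (simp add: fplay_def)
  have "b \<in> univ A"
    using guarded_subset_univ[OF wf] play_last[OF \<open>play K q\<close>] b by (auto simp: kguarded_def)
  then have "b' = b" using b'(2) \<open>fplay K q b'\<close> by (rule alpha_eq_clsD)
  with b'(2) show ?thesis by simp
qed

lemma tuple_in_play:
  assumes t: "t \<in> rel A R"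
  obtains p where "play K p" "set t \<subseteq> last p" "\<And>x. x \<in> set t \<Longrightarrow> \<alpha> x = cls K p x"
proof -
  have "map \<alpha> t \<in> rel (Gk g k A) R" using hom_alpha t by (simp add: hom_def)
  then obtain p t' where pt: "map \<alpha> t = map (cls K p) t'" "play K p" "set t' \<subseteq> last p"
    by (rule Gk_relE)
  have tu: "set t \<subseteq> univ A" using wf t by (simp add: wf_struc_def)
  have len: "length t' = length t" using pt(1) by (metis length_map)
  have "t' = t"
  proof (rule nth_equalityI)
    fix i assume i: "i < length t'"
    have "t ! i \<in> univ A" using tu i len by auto
    moreover have "\<alpha> (t ! i) = cls K p (t' ! i)"
      using arg_cong[OF pt(1), of "\<lambda>xs. xs ! i"] i len by simp
    moreover have "fplay K p (t' ! i)"
      using pt(2,3) nth_mem[OF i] by (auto simp: fplay_def)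
    ultimately show "t' ! i = t ! i" by (rule alpha_eq_clsD)
  qed (rule len)
  with pt show thesis using that by (metis map_eq_conv)
qed

lemma guarded_decomp_tau: "guarded_decomp g A \<tau>"
  unfolding guarded_decomp_def
proof (intro conjI ballI allI impI)
  fix a assume a: "a \<in> univ A"
  show "play (guarded g A) (\<tau> a)"
    using kplay_tau[OF a] by (rule play_mono[rotated]) (simp add: kguarded_def)
  show "a \<in> last (\<tau> a)" using mem_last_tau[OF a] .
next
  fix a b assume ab: "a \<in> univ A" "b \<in> univ A" "gaifman_adj A a b"
  then obtain R t where t: "t \<in> rel A R" "a \<in> set t" "b \<in> set t"
    by (auto simp: gaifman_adj_def)
  obtain p where p: "play K p" "set t \<subseteq> last p" "\<And>x. x \<in> set t \<Longrightarrow> \<alpha> x = cls K p x"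
    using tuple_in_play[OF t(1)] by blast
  have pa: "persists a (\<tau> a) p" and pb: "persists b (\<tau> b) p"
    using tau_least_cls ab(1,2) p t(2,3) by (auto simp: fplay_def)
  then have "prefix (\<tau> a) p" "prefix (\<tau> b) p" by (simp_all add: persists_def)
  from prefix_same_cases[OF this] show "\<exists>p\<in>\<tau> ` univ A. {a, b} \<subseteq> last p"
  proof
    assume "prefix (\<tau> a) (\<tau> b)"
    then have "a \<in> last (\<tau> b)"
      using persists_mem_last[OF pa _ \<open>prefix (\<tau> b) p\<close>] by blast
    with ab(2) mem_last_tau[OF ab(2)] show ?thesis by blast
  next
    assume "prefix (\<tau> b) (\<tau> a)"
    then have "b \<in> last (\<tau> a)"
      using persists_mem_last[OF pb _ \<open>prefix (\<tau> a) p\<close>] by blast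
    with ab(1) mem_last_tau[OF ab(1)] show ?thesis by blast
  qed
next
  fix a q assume a: "a \<in> univ A"
    and q: "fplay (guarded g A) q a \<and> cls (guarded g A) (\<tau> a) a = cls (guarded g A) q a"
  then have "peq (\<tau> a) a q a" using cls_eqD[OF conjunct2[OF q] conjunct1[OF q]] by simp
  then show "prefix (\<tau> a) q" using tau_least[OF a] by (simp add: persists_def)
next
  fix b q p assume b: "b \<in> univ A" and q: "p \<in> \<tau> ` univ A \<and> prefix q p \<and> q \<noteq> [] \<and> b \<in> last q"
  then obtain c where c: "c \<in> univ A" "prefix q (\<tau> c)" by blast
  have "\<alpha> b = cls K q b" using alpha_eq_cls[OF c] q by simp
  moreover have "fplay K q b"
    using play_prefix[OF kplay_tau[OF c(1)] c(2)] q by (simp add: fplay_def)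
  ultimately have "persists b (\<tau> b) q" by (rule tau_least_cls[OF b, rotated])
  then show "cls (guarded g A) (\<tau> b) b = cls (guarded g A) q b"
    by (intro cls_eqI peq_of_persists)
qed

lemma k_bounded_tau: "k_bounded k A \<tau>"
  unfolding k_bounded_def
proof
  fix p assume "p \<in> \<tau> ` univ A"
  then have "K (last p)" using play_last[OF kplay_tau] by blast
  then show "finite (last p) \<and> card (last p) \<le> k" by (simp add: kguarded_def)
qed

end

lemma coalgebra_imp_bounded_guarded_decomp:
  assumes "wf_struc ar A" "coalgebra g k A \<alpha>"
  shows "\<exists>\<tau>. guarded_decomp g A \<tau> \<and> k_bounded k A \<tau>"
proof -
  interpret guarded_coalgebra ar g k A \<alpha> using assms by unfold_locales
  show ?thesis using guarded_decomp_tau k_bounded_tau by blast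
qed

theorem theorem4p14:
  fixes g :: guarding and ar :: "'r \<Rightarrow> nat" and A :: "('a, 'r) struc"
  assumes "wf_struc ar A"
  shows "guarded_treewidth g A = coalgebra_number g A"
proof -
  have "(\<exists>\<tau>. guarded_decomp g A \<tau> \<and> k_bounded k A \<tau>) \<longleftrightarrow> (\<exists>\<alpha>. coalgebra g k A \<alpha>)" for k
    using bounded_guarded_decomp_imp_coalgebra[OF assms] coalgebra_imp_bounded_guarded_decomp[OF assms]
    by blast
  then show ?thesis unfolding guarded_treewidth_def coalgebra_number_def by simp
qed

end
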